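(* Let $P,Q_1,Q_2\in K\langle\partial_t\rangle$ be monic with $P=Q_1Q_2$, and suppose $Q_2$ is semisplit. Then $P$ is semisplit if and only if $Q_1$ is semisplit.
   Context: Let $k$ be an algebraically closed field of characteristic zero and $K=k(t,x_1,\dots,x_n)$ with the commuting derivations $\partial_t=\partial/\partial t$ and $\partial_{x_i}=\partial/\partial x_i$. Let $\mathcal U$ be a universal differential extension field of $K$ (in the sense of Kolchin), with commuting derivations extending these. Set $C_t=\{c\in\mathcal U\mid\partial_t(c)=0\}$ and $C_{\mathbf x}=\{c\in\mathcal U\mid \partial_{x_i}(c)=0\text{ for all }i\}$. An element $f\in\mathcal U$ is split if $f=gh$ with $g\in C_t$, $h\in C_{\mathbf x}$, and semisplit if it is a finite sum of split elements. A nonzero operator $P\in K\langle\partial_t\rangle$ is semisplit if it is monic and all of its coefficients are semisplit. *)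

theory Defs
  imports "HOL-Computational_Algebra.Polynomial" "HOL-Algebra.Ring"
begin

text \<open>The universal differential field U is modelled by a type 'u of class
field_char_0. Derivations are indexed by nat: D 0 is the t-derivation, D i (1 \<le> i \<le> n)
is the x_i-derivation. Generators: y 0 = t, y i = x_i (1 \<le> i \<le> n).\<close>

definition is_derivation :: "('u::field \<Rightarrow> 'u) \<Rightarrow> bool" where
  "is_derivation d \<longleftrightarrow> (\<forall>a b. d (a + b) = d a + d b \<and> d (a * b) = a * d b + d a * b)"

definition comm_derivs :: "nat \<Rightarrow> (nat \<Rightarrow> 'u::field \<Rightarrow> 'u) \<Rightarrow> bool" where
  "comm_derivs n D \<longleftrightarrow> (\<forall>i\<le>n. is_derivation (D i)) \<and>
     (\<forall>i\<le>n. \<forall>j\<le>n. \<forall>a. D i (D j a) = D j (D i a))"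

definition is_subfield :: "'u::field set \<Rightarrow> bool" where
  "is_subfield F \<longleftrightarrow> 0 \<in> F \<and> 1 \<in> F \<and> (\<forall>a\<in>F. \<forall>b\<in>F. a + b \<in> F \<and> a * b \<in> F) \<and>
     (\<forall>a\<in>F. - a \<in> F \<and> inverse a \<in> F)"

definition gen_subfield :: "'u::field set \<Rightarrow> 'u set" where
  "gen_subfield S = \<Inter>{F. is_subfield F \<and> S \<subseteq> F}"

definition gen_dsubfield :: "nat \<Rightarrow> (nat \<Rightarrow> 'u::field \<Rightarrow> 'u) \<Rightarrow> 'u set \<Rightarrow> 'u set" where
  "gen_dsubfield n D S = \<Inter>{F. is_subfield F \<and> S \<subseteq> F \<and> (\<forall>i\<le>n. \<forall>a\<in>F. D i a \<in> F)}"

definition alg_closed_subfield :: "'u::field set \<Rightarrow> bool" where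
  "alg_closed_subfield k \<longleftrightarrow> is_subfield k \<and>
     (\<forall>p::'u poly. (\<forall>i. coeff p i \<in> k) \<and> degree p \<ge> 1 \<longrightarrow> (\<exists>z\<in>k. poly p z = 0))"

definition alg_indep :: "'u::field set \<Rightarrow> nat \<Rightarrow> (nat \<Rightarrow> 'u) \<Rightarrow> bool" where
  "alg_indep k n y \<longleftrightarrow> (\<forall>(A::(nat \<Rightarrow> nat) set) c. finite A \<longrightarrow> (\<forall>\<alpha>\<in>A. c \<alpha> \<in> k) \<longrightarrow>
      (\<forall>\<alpha>\<in>A. \<forall>i>n. \<alpha> i = 0) \<longrightarrow>
      (\<Sum>\<alpha>\<in>A. c \<alpha> * (\<Prod>i\<le>n. y i ^ \<alpha> i)) = 0 \<longrightarrow> (\<forall>\<alpha>\<in>A. c \<alpha> = 0))"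

text \<open>K = k(t, x_1, ..., x_n) inside U, with D i acting as the partial derivatives.\<close>
definition rational_setting ::
  "nat \<Rightarrow> (nat \<Rightarrow> 'u::field_char_0 \<Rightarrow> 'u) \<Rightarrow> 'u set \<Rightarrow> (nat \<Rightarrow> 'u) \<Rightarrow> 'u set \<Rightarrow> bool" where
  "rational_setting n D k y K \<longleftrightarrow>
     comm_derivs n D \<and> alg_closed_subfield k \<and> alg_indep k n y \<and>
     K = gen_subfield (k \<union> y ` {0..n}) \<and>
     (\<forall>i\<le>n. \<forall>a\<in>k. D i a = 0) \<and>
     (\<forall>i\<le>n. \<forall>j\<le>n. D i (y j) = (if i = j then 1 else 0))"

text \<open>Abstract differential field extensions G (field structure on a carrier inside the type 'u,
HOL-Algebra style) with derivations DG 0, ..., DG n, and an embedding e of F into G.\<close>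
definition is_dfield :: "nat \<Rightarrow> 'u ring \<Rightarrow> (nat \<Rightarrow> 'u \<Rightarrow> 'u) \<Rightarrow> bool" where
  "is_dfield n G DG \<longleftrightarrow> field G \<and>
     (\<forall>i\<le>n. \<forall>a\<in>carrier G. DG i a \<in> carrier G) \<and>
     (\<forall>i\<le>n. \<forall>a\<in>carrier G. \<forall>b\<in>carrier G.
        DG i (a \<oplus>\<^bsub>G\<^esub> b) = DG i a \<oplus>\<^bsub>G\<^esub> DG i b \<and>
        DG i (a \<otimes>\<^bsub>G\<^esub> b) = (a \<otimes>\<^bsub>G\<^esub> DG i b) \<oplus>\<^bsub>G\<^esub> (DG i a \<otimes>\<^bsub>G\<^esub> b)) \<and>
     (\<forall>i\<le>n. \<forall>j\<le>n. \<forall>a\<in>carrier G. DG i (DG j a) = DG j (DG i a))"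

definition is_dembedding ::
  "nat \<Rightarrow> (nat \<Rightarrow> 'u::field \<Rightarrow> 'u) \<Rightarrow> 'u set \<Rightarrow> 'u ring \<Rightarrow> (nat \<Rightarrow> 'u \<Rightarrow> 'u) \<Rightarrow> ('u \<Rightarrow> 'u) \<Rightarrow> bool" where
  "is_dembedding n D F G DG e \<longleftrightarrow>
     (\<forall>a\<in>F. e a \<in> carrier G) \<and> e 1 = \<one>\<^bsub>G\<^esub> \<and>
     (\<forall>a\<in>F. \<forall>b\<in>F. e (a + b) = e a \<oplus>\<^bsub>G\<^esub> e b \<and> e (a * b) = e a \<otimes>\<^bsub>G\<^esub> e b) \<and>
     (\<forall>i\<le>n. \<forall>a\<in>F. e (D i a) = DG i (e a))"

definition gen_dsubfield_G :: "nat \<Rightarrow> 'u ring \<Rightarrow> (nat \<Rightarrow> 'u \<Rightarrow> 'u) \<Rightarrow> 'u set \<Rightarrow> 'u set" where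
  "gen_dsubfield_G n G DG T = \<Inter>{H. H \<subseteq> carrier G \<and> T \<subseteq> H \<and> \<zero>\<^bsub>G\<^esub> \<in> H \<and> \<one>\<^bsub>G\<^esub> \<in> H \<and>
      (\<forall>a\<in>H. \<forall>b\<in>H. a \<oplus>\<^bsub>G\<^esub> b \<in> H \<and> a \<otimes>\<^bsub>G\<^esub> b \<in> H) \<and>
      (\<forall>a\<in>H. \<ominus>\<^bsub>G\<^esub> a \<in> H) \<and> (\<forall>a\<in>H. a \<noteq> \<zero>\<^bsub>G\<^esub> \<longrightarrow> inv\<^bsub>G\<^esub> a \<in> H) \<and>
      (\<forall>i\<le>n. \<forall>a\<in>H. DG i a \<in> H)}"

text \<open>Kolchin universality of U over K: every finitely generated differential extension G of a
differential subfield F of U finitely generated over K embeds in U over F.\<close>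
definition universal_over :: "nat \<Rightarrow> (nat \<Rightarrow> 'u::field \<Rightarrow> 'u) \<Rightarrow> 'u set \<Rightarrow> bool" where
  "universal_over n D K \<longleftrightarrow>
    (\<forall>S F G DG e T.
       finite S \<and> F = gen_dsubfield n D (K \<union> S) \<and>
       is_dfield n G DG \<and> is_dembedding n D F G DG e \<and>
       finite T \<and> T \<subseteq> carrier G \<and> carrier G = gen_dsubfield_G n G DG (e ` F \<union> T) \<longrightarrow>
       (\<exists>\<phi>. inj_on \<phi> (carrier G) \<and> \<phi> \<one>\<^bsub>G\<^esub> = 1 \<and>
          (\<forall>a\<in>carrier G. \<forall>b\<in>carrier G. \<phi> (a \<oplus>\<^bsub>G\<^esub> b) = \<phi> a + \<phi> b \<and> \<phi> (a \<otimes>\<^bsub>G\<^esub> b) = \<phi> a * \<phi> b) \<and>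
          (\<forall>i\<le>n. \<forall>a\<in>carrier G. \<phi> (DG i a) = D i (\<phi> a)) \<and>
          (\<forall>a\<in>F. \<phi> (e a) = a)))"

definition C_t :: "(nat \<Rightarrow> 'u::field \<Rightarrow> 'u) \<Rightarrow> 'u set" where
  "C_t D = {c. D 0 c = 0}"

definition C_x :: "nat \<Rightarrow> (nat \<Rightarrow> 'u::field \<Rightarrow> 'u) \<Rightarrow> 'u set" where
  "C_x n D = {c. \<forall>i\<in>{1..n}. D i c = 0}"

definition semisplit :: "nat \<Rightarrow> (nat \<Rightarrow> 'u::field \<Rightarrow> 'u) \<Rightarrow> 'u \<Rightarrow> bool" where
  "semisplit n D f \<longleftrightarrow> (\<exists>(m::nat) g h. (\<forall>j<m. g j \<in> C_t D \<and> h j \<in> C_x n D) \<and> f = (\<Sum>j<m. g j * h j))"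

text \<open>Operators a_0 + a_1 \<partial>_t + ... + a_r \<partial>_t^r are represented as polynomials with
coefficients a_i (coefficients on the left of the powers of \<partial>_t); multiplication is the
Ore product: \<partial>^i b = \<Sum>_j (i choose j) b^(j) \<partial>^(i-j).\<close>
definition ore_mult :: "('u::field \<Rightarrow> 'u) \<Rightarrow> 'u poly \<Rightarrow> 'u poly \<Rightarrow> 'u poly" where
  "ore_mult d p q = (\<Sum>i\<le>degree p. \<Sum>j\<le>i.
      smult (coeff p i * of_nat (i choose j)) (monom 1 (i - j) * map_poly (d ^^ j) q))"

definition in_K_op :: "'u::field set \<Rightarrow> 'u poly \<Rightarrow> bool" where
  "in_K_op K p \<longleftrightarrow> (\<forall>i. coeff p i \<in> K)"

definition monic_op :: "'u::field poly \<Rightarrow> bool" where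
  "monic_op p \<longleftrightarrow> lead_coeff p = 1"

definition semisplit_op :: "nat \<Rightarrow> (nat \<Rightarrow> 'u::field \<Rightarrow> 'u) \<Rightarrow> 'u poly \<Rightarrow> bool" where
  "semisplit_op n D p \<longleftrightarrow> p \<noteq> 0 \<and> monic_op p \<and> (\<forall>i. semisplit n D (coeff p i))"

end

theory Submission
  imports Defs
begin

text \<open>The semisplit elements form a subring of U containing the integers and stable under
\<open>\<partial>\<^sub>t\<close> (because \<open>\<partial>\<^sub>t\<close> commutes with the \<open>\<partial>\<^sub>x\<^sub>i\<close>, it maps \<open>C\<^sub>x\<close> into itself and kills \<open>C\<^sub>t\<close>).
For any such differential subring S, the coefficients of an Ore product lie in S whenever those
of both factors do. Conversely, if \<open>Q\<^sub>2\<close> is monic with coefficients in S and \<open>Q\<^sub>1 Q\<^sub>2\<close> has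
coefficients in S, then the leading coefficient of \<open>Q\<^sub>1\<close> is the leading coefficient of the
product, hence in S; subtracting the leading term of \<open>Q\<^sub>1\<close> and inducting on the degree shows
that all coefficients of \<open>Q\<^sub>1\<close> lie in S.\<close>

lemma
  fixes d :: "'a::field \<Rightarrow> 'a"
  assumes "is_derivation d"
  shows derivation_add: "d (a + b) = d a + d b"
    and derivation_mult: "d (a * b) = a * d b + d a * b"
    and derivation_zero: "d 0 = 0"
    and derivation_one: "d 1 = 0"
    and derivation_minus: "d (- a) = - d a"
proof -
  show add: "d (a + b) = d a + d b" for a b
    using assms unfolding is_derivation_def by blast
  show "d (a * b) = a * d b + d a * b" for a b
    using assms unfolding is_derivation_def by blast
  from this[of 1 1] have "d 1 = d 1 + d 1" by simp
  then show "d 1 = 0" by (metis add_cancel_right_right)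
  from add[of 0 0] show zero: "d 0 = 0" by (metis add_0 add_cancel_right_right)
  from add[of a "- a"] show "d (- a) = - d a"
    by (simp add: zero eq_neg_iff_add_eq_0 add.commute)
qed

context
  fixes n :: nat and D :: "nat \<Rightarrow> 'u::field \<Rightarrow> 'u"
  assumes comm: "comm_derivs n D"
begin

lemma comm_derivs_derivation: "i \<le> n \<Longrightarrow> is_derivation (D i)"
  using comm unfolding comm_derivs_def by blast

lemma C_t_mult: "a \<in> C_t D \<Longrightarrow> b \<in> C_t D \<Longrightarrow> a * b \<in> C_t D"
  by (simp add: C_t_def derivation_mult comm_derivs_derivation)

lemma C_t_minus: "a \<in> C_t D \<Longrightarrow> - a \<in> C_t D"
  by (simp add: C_t_def derivation_minus comm_derivs_derivation)

lemma C_t_one: "1 \<in> C_t D"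
  by (simp add: C_t_def derivation_one comm_derivs_derivation)

lemma C_x_mult: "a \<in> C_x n D \<Longrightarrow> b \<in> C_x n D \<Longrightarrow> a * b \<in> C_x n D"
  by (simp add: C_x_def derivation_mult comm_derivs_derivation)

lemma C_x_one: "1 \<in> C_x n D"
  by (simp add: C_x_def derivation_one comm_derivs_derivation)

lemma C_x_D0: "a \<in> C_x n D \<Longrightarrow> D 0 a \<in> C_x n D"
proof -
  assume a: "a \<in> C_x n D"
  have "D i (D 0 a) = 0" if "i \<in> {1..n}" for i
  proof -
    have "D i (D 0 a) = D 0 (D i a)" using comm that unfolding comm_derivs_def by auto
    also have "\<dots> = 0" using a that by (simp add: C_x_def derivation_zero comm_derivs_derivation)
    finally show ?thesis .
  qed
  then show ?thesis by (simp add: C_x_def)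
qed

lemma semisplit_zero: "semisplit n D 0"
  unfolding semisplit_def by (rule exI[of _ 0]) simp

lemma semisplit_add_split:
  assumes "semisplit n D f" "g \<in> C_t D" "h \<in> C_x n D"
  shows "semisplit n D (f + g * h)"
proof -
  obtain m :: nat and G H where GH: "\<forall>j<m. G j \<in> C_t D \<and> H j \<in> C_x n D"
    and f: "f = (\<Sum>j<m. G j * H j)"
    using assms(1) unfolding semisplit_def by blast
  show ?thesis unfolding semisplit_def
    by (rule exI[of _ "Suc m"], rule exI[of _ "G(m := g)"], rule exI[of _ "H(m := h)"])
      (use GH f assms(2,3) in \<open>auto simp: less_Suc_eq\<close>)
qed

lemma semisplit_induct [consumes 1, case_names zero add_split]:
  assumes "semisplit n D f"
    and "P 0"
    and "\<And>f g h. P f \<Longrightarrow> g \<in> C_t D \<Longrightarrow> h \<in> C_x n D \<Longrightarrow> P (f + g * h)"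
  shows "P f"
proof -
  obtain m :: nat and G H where GH: "\<forall>j<m. G j \<in> C_t D \<and> H j \<in> C_x n D"
    and f: "f = (\<Sum>j<m. G j * H j)"
    using assms(1) unfolding semisplit_def by blast
  have "P (\<Sum>j<l. G j * H j)" if "l \<le> m" for l
    using that by (induction l) (auto simp: assms(2,3) GH)
  then show ?thesis using f by blast
qed

lemma semisplit_add:
  assumes "semisplit n D a" "semisplit n D b"
  shows "semisplit n D (a + b)"
  using assms(2) by (induction b rule: semisplit_induct) (use assms(1) in \<open>simp_all add: semisplit_add_split add.assoc[symmetric]\<close>)

lemma semisplit_minus: "semisplit n D a \<Longrightarrow> semisplit n D (- a)"
  by (induction a rule: semisplit_induct)
    (auto simp: semisplit_zero intro!: semisplit_add_split[of _ "- _", simplified] C_t_minus)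

lemma semisplit_mult_split:
  assumes "semisplit n D a" "g \<in> C_t D" "h \<in> C_x n D"
  shows "semisplit n D (g * h * a)"
  using assms(1)
proof (induction a rule: semisplit_induct)
  case zero
  show ?case by (simp add: semisplit_zero)
next
  case (add_split f g' h')
  have "g * h * (f + g' * h') = g * h * f + (g * g') * (h * h')" by (simp add: algebra_simps)
  then show ?case
    using add_split assms(2,3) by (metis semisplit_add_split C_t_mult C_x_mult)
qed

lemma semisplit_mult: "semisplit n D a \<Longrightarrow> semisplit n D b \<Longrightarrow> semisplit n D (a * b)"
  by (induction a rule: semisplit_induct)
    (simp_all add: semisplit_zero distrib_right semisplit_add semisplit_mult_split)

lemma semisplit_one: "semisplit n D 1"
  using semisplit_add_split[OF semisplit_zero C_t_one C_x_one] by simp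

lemma semisplit_D0: "semisplit n D a \<Longrightarrow> semisplit n D (D 0 a)"
  by (induction a rule: semisplit_induct)
    (auto simp: semisplit_zero C_t_def derivation_zero derivation_add derivation_mult
      comm_derivs_derivation intro!: semisplit_add_split C_x_D0)

end

definition ore_term :: "('a::field \<Rightarrow> 'a) \<Rightarrow> 'a poly \<Rightarrow> 'a poly \<Rightarrow> nat \<Rightarrow> nat \<Rightarrow> nat \<Rightarrow> 'a" where
  "ore_term d p q m i j = coeff p i * of_nat (i choose j) *
     (if i - j \<le> m then coeff (map_poly (d ^^ j) q) (m - (i - j)) else 0)"

lemma coeff_ore_mult:
  assumes "degree p \<le> N"
  shows "coeff (ore_mult d p q) m = (\<Sum>i\<le>N. \<Sum>j\<le>i. ore_term d p q m i j)"
proof -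
  have "ore_mult d p q = (\<Sum>i\<le>N. \<Sum>j\<le>i.
      smult (coeff p i * of_nat (i choose j)) (monom 1 (i - j) * map_poly (d ^^ j) q))"
    unfolding ore_mult_def
    by (rule sum.mono_neutral_left) (use assms in \<open>auto simp: coeff_eq_0\<close>)
  then show ?thesis
    by (auto simp: ore_term_def coeff_sum coeff_monom_mult intro!: sum.cong)
qed

lemma coeff_ore_mult_diff_left:
  "coeff (ore_mult d (p1 - p2) q) m = coeff (ore_mult d p1 q) m - coeff (ore_mult d p2 q) m"
proof -
  define N where "N = max (degree p1) (degree p2)"
  have "degree p1 \<le> N" "degree p2 \<le> N" "degree (p1 - p2) \<le> N"
    by (simp_all add: N_def degree_diff_le_max)
  then show ?thesis
    by (simp add: coeff_ore_mult ore_term_def algebra_simps sum_subtractf)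
qed

lemma coeff_ore_mult_top:
  "coeff (ore_mult d p q) (degree p + degree q) = lead_coeff p * lead_coeff q"
proof -
  let ?r = "degree p" and ?s = "degree q"
  let ?t = "ore_term d p q (?r + ?s)"
  have vanish: "?t i j = 0" if "i \<le> ?r" "j \<le> i" "(i, j) \<noteq> (?r, 0)" for i j
  proof -
    have "i - j < ?r" using that by auto
    then have "?r + ?s - (i - j) > degree (map_poly (d ^^ j) q)"
      using map_poly_degree_leq[of "d ^^ j" q] by linarith
    then show ?thesis unfolding ore_term_def by (simp add: coeff_eq_0)
  qed
  have "(\<Sum>j\<le>i. ?t i j) = (if i = ?r then ?t ?r 0 else 0)" if "i \<le> ?r" for i
  proof (cases "i = ?r")
    case True
    have "(\<Sum>j\<le>i. ?t i j) = ?t i 0 + (\<Sum>j\<in>{..i} - {0}. ?t i j)"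
      by (subst sum.remove[of _ 0]) auto
    also have "(\<Sum>j\<in>{..i} - {0}. ?t i j) = 0"
      by (rule sum.neutral) (use vanish True in auto)
    finally show ?thesis using True by simp
  next
    case False
    then show ?thesis using vanish that by (auto intro!: sum.neutral)
  qed
  then have "coeff (ore_mult d p q) (?r + ?s) = (\<Sum>i\<le>?r. if i = ?r then ?t ?r 0 else 0)"
    by (simp add: coeff_ore_mult[of p ?r])
  also have "\<dots> = lead_coeff p * lead_coeff q"
    by (simp add: ore_term_def map_poly_idI)
  finally show ?thesis .
qed

locale differential_subring =
  fixes S :: "'a::field set" and d :: "'a \<Rightarrow> 'a"
  assumes zero_mem: "0 \<in> S" and one_mem: "1 \<in> S"
    and add_mem: "a \<in> S \<Longrightarrow> b \<in> S \<Longrightarrow> a + b \<in> S"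
    and mult_mem: "a \<in> S \<Longrightarrow> b \<in> S \<Longrightarrow> a * b \<in> S"
    and minus_mem: "a \<in> S \<Longrightarrow> - a \<in> S"
    and deriv_mem: "a \<in> S \<Longrightarrow> d a \<in> S"
    and deriv_zero: "d 0 = 0"
begin

lemma diff_mem: "a \<in> S \<Longrightarrow> b \<in> S \<Longrightarrow> a - b \<in> S"
  by (metis add_mem minus_mem diff_conv_add_uminus)

lemma of_nat_mem: "of_nat c \<in> S"
  by (induction c) (simp_all add: zero_mem one_mem add_mem)

lemma sum_mem: "(\<And>x. x \<in> A \<Longrightarrow> f x \<in> S) \<Longrightarrow> sum f A \<in> S"
  by (induction A rule: infinite_finite_induct) (simp_all add: zero_mem add_mem)

lemma funpow_deriv_zero: "(d ^^ j) 0 = 0"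
  by (induction j) (simp_all add: deriv_zero)

lemma funpow_deriv_mem: "a \<in> S \<Longrightarrow> (d ^^ j) a \<in> S"
  by (induction j) (simp_all add: deriv_mem)

lemma coeff_ore_mult_mem:
  assumes "\<forall>i. coeff p i \<in> S" "\<forall>i. coeff q i \<in> S"
  shows "coeff (ore_mult d p q) m \<in> S"
  unfolding coeff_ore_mult[of p "degree p", OF order_refl]
  by (intro sum_mem)
    (simp add: ore_term_def coeff_map_poly funpow_deriv_zero assms mult_mem of_nat_mem
      funpow_deriv_mem zero_mem)

lemma coeff_mem_if_ore_mult_monic:
  assumes q: "\<forall>i. coeff q i \<in> S" "lead_coeff q = 1"
    and pq: "\<forall>m. coeff (ore_mult d p q) m \<in> S"
  shows "\<forall>i. coeff p i \<in> S"
  using pq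
proof (induction "degree p" arbitrary: p rule: less_induct)
  case less
  define r where "r = degree p"
  define c where "c = lead_coeff p"
  have "c = coeff (ore_mult d p q) (degree p + degree q)"
    by (simp add: coeff_ore_mult_top q(2) c_def)
  then have "c \<in> S" using less.prems by simp
  then have lead_term: "\<forall>i. coeff (monom c r) i \<in> S"
    by (simp add: coeff_monom zero_mem)
  define p' where "p' = p - monom c r"
  have "\<forall>m. coeff (ore_mult d p' q) m \<in> S"
    unfolding p'_def coeff_ore_mult_diff_left
    using less.prems coeff_ore_mult_mem[OF lead_term q(1)] diff_mem by blast
  moreover have "p' = 0 \<or> degree p' < degree p"
  proof (cases "p' = 0")
    case False
    have "degree p' \<le> r"
      by (rule degree_le) (auto simp: p'_def coeff_monom r_def coeff_eq_0)
    moreover have "coeff p' r = 0" by (simp add: p'_def c_def r_def)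
    then have "degree p' \<noteq> r" using False by auto
    ultimately show ?thesis by (simp add: r_def)
  qed simp
  ultimately have "\<forall>i. coeff p' i \<in> S"
    using less.hyps zero_mem by auto
  moreover have "p = p' + monom c r" by (simp add: p'_def)
  ultimately show ?case using lead_term add_mem by (metis coeff_add)
qed

end

lemma semisplit_differential_subring:
  assumes "comm_derivs n D"
  shows "differential_subring {f. semisplit n D f} (D 0)"
  by unfold_locales
    (simp_all add: assms semisplit_zero semisplit_one semisplit_add semisplit_mult semisplit_minus
      semisplit_D0 derivation_zero[OF comm_derivs_derivation[OF assms]])

theorem mainTheorem10:
  fixes n :: nat and D :: "nat \<Rightarrow> 'u::field_char_0 \<Rightarrow> 'u"
    and k K :: "'u set" and y :: "nat \<Rightarrow> 'u"
    and P Q1 Q2 :: "'u poly"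
  assumes "rational_setting n D k y K"
    and "universal_over n D K"
    and "in_K_op K P" and "in_K_op K Q1" and "in_K_op K Q2"
    and "monic_op P" and "monic_op Q1" and "monic_op Q2"
    and "P = ore_mult (D 0) Q1 Q2"
    and "semisplit_op n D Q2"
  shows "semisplit_op n D P \<longleftrightarrow> semisplit_op n D Q1"
proof -
  have "comm_derivs n D" using assms(1) unfolding rational_setting_def by blast
  then interpret differential_subring "{f. semisplit n D f}" "D 0"
    by (rule semisplit_differential_subring)
  have Q2: "\<forall>i. coeff Q2 i \<in> {f. semisplit n D f}" "lead_coeff Q2 = 1"
    using assms(10) unfolding semisplit_op_def monic_op_def by auto
  have monic: "P \<noteq> 0" "Q1 \<noteq> 0" "lead_coeff P = 1" "lead_coeff Q1 = 1"
    using assms(6,7) unfolding monic_op_def by auto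
  have "(\<forall>i. semisplit n D (coeff P i)) \<longleftrightarrow> (\<forall>i. semisplit n D (coeff Q1 i))"
    using coeff_ore_mult_mem[OF _ Q2(1)] coeff_mem_if_ore_mult_monic[OF Q2] assms(9)
    by blast
  then show ?thesis
    using monic unfolding semisplit_op_def monic_op_def by blast
qed

end
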